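(* Every exact-repair regenerating code of type $(5,4,4)$ with parameters $(B,\alpha,\beta)$ satisfies \[ 5B\le 7\alpha+22\beta\;(=3B_1+2B_2-2\beta). \]
   Context: Fix integers $1\le k\le d\le n-1$. An exact-repair regenerating code of type $(n,k,d)$ with parameters $(B,\alpha,\beta)$ (nonnegative reals) is a collection of jointly distributed discrete random variables $M$, $W_j$ ($1\le j\le n$), $S_i^j$ ($1\le i,j\le n$, $i\neq j$) such that, with $H$ denoting Shannon entropy: $H(M)=B$; $H(W_j)=\alpha$ and $H(W_j\mid M)=0$ for all $j$; $H(M\mid W_J)=0$ for every $J\subseteq\{1,\dots,n\}$ with $|J|\ge k$; $H(S_i^j)=\beta$ and $H(S_i^j\mid W_i)=0$ for all $i\ne j$; and $H(W_j\mid S_I^j)=0$ for every $I\subseteq\{1,\dots,n\}\setminus\{j\}$ with $|I|\ge d$. Notation: for a set $J$, $W_J=(W_j)_{j\in J}$; $S_I^j=(S_i^j)_{i\in I}$. For $0\le q\le k$, $B_q=q\alpha+\binom{k-q}{2}\beta+(d+1-k)(k-q)\beta$; for $(n,k,d)=(5,4,4)$, $B_1=\alpha+6\beta$, $B_2=2\alpha+3\beta$. *)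

theory Defs
  imports "HOL-Probability.Probability"
begin

text \<open>Jointly distributed discrete random variables are modelled as functions on
  a common (discrete) probability space given by a pmf p.  Shannon entropy
  (base 2) takes values in ennreal, so that infinite entropy is allowed.\<close>

definition ent :: "'o pmf \<Rightarrow> ('o \<Rightarrow> 'x) \<Rightarrow> ennreal" where
  "ent p X = (\<integral>\<^sup>+ x. ennreal (- pmf (map_pmf X p) x * log 2 (pmf (map_pmf X p) x))
                 \<partial>count_space UNIV)"

definition cond_ent :: "'o pmf \<Rightarrow> ('o \<Rightarrow> 'x) \<Rightarrow> ('o \<Rightarrow> 'y) \<Rightarrow> ennreal" where
  "cond_ent p X Y = (\<integral>\<^sup>+ xy. ennreal (- pmf (map_pmf (\<lambda>w. (X w, Y w)) p) xy *
        log 2 (pmf (map_pmf (\<lambda>w. (X w, Y w)) p) xy / pmf (map_pmf Y p) (snd xy)))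
      \<partial>count_space UNIV)"

definition tup :: "nat set \<Rightarrow> (nat \<Rightarrow> 'o \<Rightarrow> 'x) \<Rightarrow> 'o \<Rightarrow> (nat \<Rightarrow> 'x)" where
  "tup I X = (\<lambda>w i. if i \<in> I then X i w else undefined)"

text \<open>Exact-repair regenerating code of type (n,k,d) with parameters (B,alpha,beta).
  Nodes are indexed by {1..n}; S i j is the random variable S_i^j (sent from i to j).\<close>
definition regen_code ::
  "nat \<Rightarrow> nat \<Rightarrow> nat \<Rightarrow> 'o pmf \<Rightarrow> ('o \<Rightarrow> 'm) \<Rightarrow> (nat \<Rightarrow> 'o \<Rightarrow> 'w)
   \<Rightarrow> (nat \<Rightarrow> nat \<Rightarrow> 'o \<Rightarrow> 's) \<Rightarrow> real \<Rightarrow> real \<Rightarrow> real \<Rightarrow> bool" where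
  "regen_code n k d p M W S B \<alpha> \<beta> \<longleftrightarrow>
     1 \<le> k \<and> k \<le> d \<and> d \<le> n - 1 \<and>
     B \<ge> 0 \<and> \<alpha> \<ge> 0 \<and> \<beta> \<ge> 0 \<and>
     ent p M = ennreal B \<and>
     (\<forall>j\<in>{1..n}. ent p (W j) = ennreal \<alpha> \<and> cond_ent p (W j) M = 0) \<and>
     (\<forall>J. J \<subseteq> {1..n} \<and> card J \<ge> k \<longrightarrow> cond_ent p M (tup J W) = 0) \<and>
     (\<forall>i\<in>{1..n}. \<forall>j\<in>{1..n}. i \<noteq> j \<longrightarrow>
        ent p (S i j) = ennreal \<beta> \<and> cond_ent p (S i j) (W i) = 0) \<and>
     (\<forall>j\<in>{1..n}. \<forall>I. I \<subseteq> {1..n} - {j} \<and> card I \<ge> d \<longrightarrow>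
        cond_ent p (W j) (tup I (\<lambda>i. S i j)) = 0)"

end

theory Submission
  imports Defs
begin

text \<open>The bound is a nonnegative combination of Shannon inequalities for the 25 random
  variables \<open>W\<^sub>j\<close> and \<open>S\<^sub>i\<^sup>j\<close>, together with \<open>H(W\<^sub>j, S\<^sub>j\<^sup>\<bullet>) = \<alpha>\<close>, \<open>H(S\<^sub>i\<^sup>j) = \<beta>\<close> and
  \<open>H(all variables) = B\<close>.  Submodularity is used in the strengthened form
  \<open>H(U) + H(X) \<le> H(A) + H(C)\<close> for \<open>X \<subseteq> A \<inter> C\<close> and \<open>U\<close> determined by \<open>A \<union> C\<close>, where
  determination is generated by the functional dependencies of the code: \<open>S\<^sub>i\<^sup>j\<close> is a
  function of \<open>W\<^sub>i\<close>, \<open>W\<^sub>j\<close> of any \<open>d\<close> of its incoming messages, and everything of any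
  \<open>k\<close> stored contents.  For the 57 inequalities needed, two rounds of these rules suffice.\<close>

section \<open>Shannon inequalities for discrete random variables\<close>

definition prob_atom :: "'o pmf \<Rightarrow> ('o \<Rightarrow> 'x) \<Rightarrow> 'o \<Rightarrow> real" where
  "prob_atom p X w = measure_pmf.prob p {w'. X w' = X w}"

lemma prob_atom_pos: "w \<in> set_pmf p \<Longrightarrow> 0 < prob_atom p X w"
  unfolding prob_atom_def by (rule measure_pmf_posI) auto

lemma prob_atom_le_1: "prob_atom p X w \<le> 1"
  unfolding prob_atom_def by simp

lemma ent_eq_nn_integral_prob_atom:
  "ent p X = (\<integral>\<^sup>+w. ennreal (- log 2 (prob_atom p X w)) \<partial>measure_pmf p)"
proof -
  let ?q = "map_pmf X p"
  have "(\<integral>\<^sup>+w. ennreal (- log 2 (prob_atom p X w)) \<partial>measure_pmf p)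
      = (\<integral>\<^sup>+w. ennreal (- log 2 (pmf ?q (X w))) \<partial>measure_pmf p)"
    unfolding prob_atom_def pmf_map by (simp add: vimage_def)
  also have "\<dots> = (\<integral>\<^sup>+x. ennreal (- log 2 (pmf ?q x)) \<partial>measure_pmf ?q)"
    by simp
  also have "\<dots> = (\<integral>\<^sup>+x. ennreal (pmf ?q x) * ennreal (- log 2 (pmf ?q x)) \<partial>count_space UNIV)"
    by (rule nn_integral_measure_pmf)
  also have "\<dots> = ent p X"
    unfolding ent_def by (intro nn_integral_cong) (simp add: ennreal_mult'[symmetric])
  finally show ?thesis by simp
qed

lemma prob_atom_mono:
  assumes "\<forall>w\<in>set_pmf p. \<forall>w'\<in>set_pmf p. Y w = Y w' \<longrightarrow> X w = X w'" and "w \<in> set_pmf p"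
  shows "prob_atom p Y w \<le> prob_atom p X w"
proof -
  have "{w'. Y w' = Y w} \<inter> set_pmf p \<subseteq> {w'. X w' = X w} \<inter> set_pmf p"
    using assms by blast
  then have "measure_pmf.prob p ({w'. Y w' = Y w} \<inter> set_pmf p)
      \<le> measure_pmf.prob p ({w'. X w' = X w} \<inter> set_pmf p)"
    by (rule measure_pmf.finite_measure_mono) simp
  then show ?thesis unfolding prob_atom_def by (simp add: measure_Int_set_pmf)
qed

lemma ent_le_if_determined:
  assumes "\<forall>w\<in>set_pmf p. \<forall>w'\<in>set_pmf p. Y w = Y w' \<longrightarrow> X w = X w'"
  shows "ent p X \<le> ent p Y"
  unfolding ent_eq_nn_integral_prob_atom
proof (intro nn_integral_mono_AE AE_pmfI ennreal_leI)
  fix w assume w: "w \<in> set_pmf p"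
  have "prob_atom p Y w \<le> prob_atom p X w" and "0 < prob_atom p Y w"
    using prob_atom_mono[OF assms w] prob_atom_pos[OF w] by simp_all
  then show "- log 2 (prob_atom p X w) \<le> - log 2 (prob_atom p Y w)"
    by simp
qed

lemma ent_cong_partition:
  assumes "\<forall>w\<in>set_pmf p. \<forall>w'\<in>set_pmf p. X w = X w' \<longleftrightarrow> Y w = Y w'"
  shows "ent p X = ent p Y"
  using assms by (intro antisym ent_le_if_determined) auto

lemma measure_cond_pmf:
  assumes "set_pmf p \<inter> E \<noteq> {}"
  shows "measure_pmf.prob (cond_pmf p E) A = measure_pmf.prob p (E \<inter> A) / measure_pmf.prob p E"
proof -
  have pos: "0 < measure_pmf.prob p E"
    using assms by (auto intro: measure_pmf_posI)
  have "emeasure (cond_pmf p E) A = emeasure p (E \<inter> A) / emeasure p E"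
    using assms by (simp add: cond_pmf.rep_eq emeasure_uniform_measure)
  also have "\<dots> = ennreal (measure_pmf.prob p (E \<inter> A) / measure_pmf.prob p E)"
    using pos by (simp add: measure_pmf.emeasure_eq_measure divide_ennreal)
  finally show ?thesis
    by (simp add: measure_pmf.emeasure_eq_measure)
qed

text \<open>The ratio below is \<open>2\<close> to the power minus the pointwise conditional mutual
  information of \<open>X\<close> and \<open>Y\<close> given \<open>Z\<close>.  Its expectation is at most \<open>1\<close>; together with
  \<open>ln t \<le> t - 1\<close> this yields \<open>I(X;Y|Z) \<ge> 0\<close>, i.e.\ submodularity of entropy.\<close>

definition cmi_ratio :: "'o pmf \<Rightarrow> ('o \<Rightarrow> 'x) \<Rightarrow> ('o \<Rightarrow> 'y) \<Rightarrow> ('o \<Rightarrow> 'z) \<Rightarrow> 'o \<Rightarrow> real" where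
  "cmi_ratio p X Y Z w =
     prob_atom p (\<lambda>w. (X w, Z w)) w * prob_atom p (\<lambda>w. (Y w, Z w)) w /
     (prob_atom p (\<lambda>w. (X w, Y w, Z w)) w * prob_atom p Z w)"

lemma nn_integral_cond_cmi_ratio_le_1:
  assumes w0: "w0 \<in> set_pmf p"
  shows "(\<integral>\<^sup>+w. ennreal (cmi_ratio p X Y Z w)
           \<partial>measure_pmf (cond_pmf p {w. X w0 = X w \<and> Z w0 = Z w})) \<le> 1"
proof -
  define E where "E = {w. X w0 = X w \<and> Z w0 = Z w}"
  define Ez where "Ez = {w. Z w = Z w0}"
  define K where "K = cond_pmf p E"
  define a where "a = measure_pmf.prob p E"
  define c where "c = measure_pmf.prob p Ez"
  define b where "b y = measure_pmf.prob p {w. Y w = y \<and> Z w = Z w0}" for y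
  define e where "e y = measure_pmf.prob p {w. X w = X w0 \<and> Y w = y \<and> Z w = Z w0}" for y
  have E: "set_pmf p \<inter> E \<noteq> {}" and Ez: "set_pmf p \<inter> Ez \<noteq> {}"
    using w0 by (auto simp: E_def Ez_def)
  have a_pos: "0 < a" and c_pos: "0 < c"
    unfolding a_def c_def using E Ez by (auto intro: measure_pmf_posI)
  have ratio: "cmi_ratio p X Y Z w = a * b (Y w) / (e (Y w) * c)" if "w \<in> set_pmf K" for w
  proof -
    from that have "X w = X w0" "Z w = Z w0"
      using E by (auto simp: K_def E_def)
    then show ?thesis
      unfolding cmi_ratio_def prob_atom_def a_def b_def c_def e_def E_def Ez_def
      by (simp add: eq_commute conj_commute mult.commute)
  qed
  have "(\<integral>\<^sup>+w. ennreal (cmi_ratio p X Y Z w) \<partial>measure_pmf K)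
      = (\<integral>\<^sup>+w. ennreal (a * b (Y w) / (e (Y w) * c)) \<partial>measure_pmf K)"
    by (intro nn_integral_cong_AE AE_pmfI) (simp add: ratio)
  also have "\<dots> = (\<integral>\<^sup>+y. ennreal (a * b y / (e y * c)) \<partial>measure_pmf (map_pmf Y K))"
    by simp
  also have "\<dots> = (\<integral>\<^sup>+y. ennreal (pmf (map_pmf Y K) y) * ennreal (a * b y / (e y * c)) \<partial>count_space UNIV)"
    by (rule nn_integral_measure_pmf)
  also have "\<dots> \<le> (\<integral>\<^sup>+y. ennreal (pmf (map_pmf Y (cond_pmf p Ez)) y) \<partial>count_space UNIV)"
  proof (intro nn_integral_mono)
    fix y
    have "pmf (map_pmf Y K) y = measure_pmf.prob p (E \<inter> Y -` {y}) / a"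
      unfolding pmf_map K_def a_def by (rule measure_cond_pmf[OF E])
    also have "E \<inter> Y -` {y} = {w. X w = X w0 \<and> Y w = y \<and> Z w = Z w0}"
      by (auto simp: E_def)
    finally have K_y: "pmf (map_pmf Y K) y = e y / a"
      by (simp add: e_def)
    have "pmf (map_pmf Y (cond_pmf p Ez)) y = measure_pmf.prob p (Ez \<inter> Y -` {y}) / c"
      unfolding pmf_map c_def by (rule measure_cond_pmf[OF Ez])
    also have "Ez \<inter> Y -` {y} = {w. Y w = y \<and> Z w = Z w0}"
      by (auto simp: Ez_def)
    finally have Ez_y: "pmf (map_pmf Y (cond_pmf p Ez)) y = b y / c"
      by (simp add: b_def)
    have "e y / a * (a * b y / (e y * c)) \<le> b y / c"
      using a_pos c_pos by (cases "e y = 0") (simp_all add: b_def field_simps)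
    then show "ennreal (pmf (map_pmf Y K) y) * ennreal (a * b y / (e y * c))
        \<le> ennreal (pmf (map_pmf Y (cond_pmf p Ez)) y)"
      unfolding K_y Ez_y using a_pos by (simp add: e_def ennreal_mult'[symmetric] ennreal_leI)
  qed
  also have "\<dots> = 1"
    by (simp add: nn_integral_pmf)
  finally show ?thesis
    unfolding K_def E_def .
qed

lemma nn_integral_cmi_ratio_le_1:
  "(\<integral>\<^sup>+w. ennreal (cmi_ratio p X Y Z w) \<partial>measure_pmf p) \<le> 1"
proof -
  define K where "K w = cond_pmf p {w'. X w = X w' \<and> Z w = Z w'}" for w
  have "bind_pmf p K = p"
    unfolding K_def by (rule bind_cond_pmf_cancel) (auto intro!: arg_cong[where f = "measure_pmf.prob p"])
  then have "(\<integral>\<^sup>+w. ennreal (cmi_ratio p X Y Z w) \<partial>measure_pmf p)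
      = (\<integral>\<^sup>+w. (\<integral>\<^sup>+w'. ennreal (cmi_ratio p X Y Z w') \<partial>measure_pmf (K w)) \<partial>measure_pmf p)"
    by (metis nn_integral_bind_pmf)
  also have "\<dots> \<le> (\<integral>\<^sup>+w. 1 \<partial>measure_pmf p)"
    unfolding K_def by (intro nn_integral_mono_AE AE_pmfI nn_integral_cond_cmi_ratio_le_1)
  finally show ?thesis
    by simp
qed

lemma ent_submodular:
  "ent p (\<lambda>w. (X w, Y w, Z w)) + ent p Z \<le> ent p (\<lambda>w. (X w, Z w)) + ent p (\<lambda>w. (Y w, Z w))"
proof -
  define c :: ennreal where "c = ennreal (1 / ln 2)"
  define a where "a = prob_atom p (\<lambda>w. (X w, Z w))"
  define b where "b = prob_atom p (\<lambda>w. (Y w, Z w))"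
  define e where "e = prob_atom p (\<lambda>w. (X w, Y w, Z w))"
  define z where "z = prob_atom p Z"
  have pointwise: "ennreal (- log 2 (e w)) + ennreal (- log 2 (z w)) + c
      \<le> ennreal (- log 2 (a w)) + ennreal (- log 2 (b w)) + c * ennreal (cmi_ratio p X Y Z w)"
    if w: "w \<in> set_pmf p" for w
  proof -
    define t where "t = cmi_ratio p X Y Z w"
    have pos: "0 < a w" "0 < b w" "0 < e w" "0 < z w"
      unfolding a_def b_def e_def z_def using prob_atom_pos[OF w] by auto
    have le1: "a w \<le> 1" "b w \<le> 1" "e w \<le> 1" "z w \<le> 1"
      unfolding a_def b_def e_def z_def by (simp_all add: prob_atom_le_1)
    have t: "t = a w * b w / (e w * z w)"
      unfolding t_def cmi_ratio_def a_def b_def e_def z_def ..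
    have t_pos: "0 < t"
      unfolding t using pos by simp
    have "log 2 t = log 2 (a w) + log 2 (b w) - log 2 (e w) - log 2 (z w)"
      unfolding t using pos by (simp add: log_mult log_divide)
    moreover have "log 2 t \<le> (t - 1) / ln 2"
      using ln_le_minus_one[OF t_pos] unfolding log_def by (simp add: divide_right_mono)
    ultimately have "- log 2 (e w) + - log 2 (z w) + 1 / ln 2 \<le> - log 2 (a w) + - log 2 (b w) + 1 / ln 2 * t"
      by (simp add: diff_divide_distrib)
    moreover have nn: "0 \<le> - log 2 (a w)" "0 \<le> - log 2 (b w)" "0 \<le> - log 2 (e w)" "0 \<le> - log 2 (z w)"
      "0 \<le> 1 / ln (2::real)"
      using pos le1 by simp_all
    ultimately show ?thesis
      unfolding c_def t_def[symmetric] using t_pos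
      by (metis add_nonneg_nonneg ennreal_leI ennreal_mult ennreal_plus less_imp_le mult_nonneg_nonneg)
  qed
  have "ent p (\<lambda>w. (X w, Y w, Z w)) + ent p Z + c
      = (\<integral>\<^sup>+w. ennreal (- log 2 (e w)) + ennreal (- log 2 (z w)) + c \<partial>measure_pmf p)"
    unfolding ent_eq_nn_integral_prob_atom e_def z_def by (simp add: nn_integral_add)
  also have "\<dots> \<le> (\<integral>\<^sup>+w. ennreal (- log 2 (a w)) + ennreal (- log 2 (b w))
      + c * ennreal (cmi_ratio p X Y Z w) \<partial>measure_pmf p)"
    by (intro nn_integral_mono_AE AE_pmfI pointwise)
  also have "\<dots> = ent p (\<lambda>w. (X w, Z w)) + ent p (\<lambda>w. (Y w, Z w))
      + c * (\<integral>\<^sup>+w. ennreal (cmi_ratio p X Y Z w) \<partial>measure_pmf p)"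
    unfolding ent_eq_nn_integral_prob_atom a_def b_def by (simp add: nn_integral_add nn_integral_cmult)
  also have "\<dots> \<le> ent p (\<lambda>w. (X w, Z w)) + ent p (\<lambda>w. (Y w, Z w)) + c * 1"
    by (intro add_left_mono mult_left_mono nn_integral_cmi_ratio_le_1) simp
  finally show ?thesis
    unfolding c_def by (simp add: ennreal_add_left_cancel_le add.commute[of _ "ennreal _"] add.assoc[symmetric])
qed

lemma cond_ent_eq_0_imp_eq:
  assumes ce: "cond_ent p X Y = 0" and w: "w \<in> set_pmf p" and w': "w' \<in> set_pmf p"
    and eq: "Y w = Y w'"
  shows "X w = X w'"
proof (rule ccontr)
  assume ne: "X w \<noteq> X w'"
  define A where "A = {v. Y v = Y w}"
  define C where "C = {v. X v = X w \<and> Y v = Y w}"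
  have C_sub: "C \<subseteq> A" and C_pos: "0 < measure_pmf.prob p C"
    using w by (auto simp: A_def C_def intro: measure_pmf_posI)
  have C_le: "measure_pmf.prob p C \<le> measure_pmf.prob p A"
    by (rule measure_pmf.finite_measure_mono[OF C_sub]) simp
  have "AE xy in count_space UNIV.
      ennreal (- pmf (map_pmf (\<lambda>w. (X w, Y w)) p) xy
        * log 2 (pmf (map_pmf (\<lambda>w. (X w, Y w)) p) xy / pmf (map_pmf Y p) (snd xy))) = 0"
    using ce unfolding cond_ent_def by (subst (asm) nn_integral_0_iff_AE) auto
  then have "- measure_pmf.prob p C * log 2 (measure_pmf.prob p C / measure_pmf.prob p A) \<le> 0"
    unfolding A_def C_def AE_count_space pmf_map by (force simp: vimage_def ennreal_eq_0_iff)
  then have "1 \<le> measure_pmf.prob p C / measure_pmf.prob p A"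
    using C_pos C_le by (simp add: zero_le_mult_iff zero_le_log_cancel_iff)
  then have "measure_pmf.prob p (A - C) = 0"
    using C_pos C_le by (simp add: measure_pmf.finite_measure_Diff[OF _ _ C_sub] le_divide_eq split: if_splits)
  moreover have "0 < measure_pmf.prob p (A - C)"
    by (rule measure_pmf_posI[OF w']) (use eq ne in \<open>auto simp: A_def C_def\<close>)
  ultimately show False
    by simp
qed

lemma cond_ent_tup_eq_0_imp_eq:
  assumes "cond_ent p X (tup I Y) = 0" and "w \<in> set_pmf p" and "w' \<in> set_pmf p"
    and "\<forall>i\<in>I. Y i w = Y i w'"
  shows "X w = X w'"
  using assms(4) by (intro cond_ent_eq_0_imp_eq[OF assms(1-3)]) (auto simp: tup_def)


section \<open>Information flow in a regenerating code\<close>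

datatype code_var = Stored nat | Sent nat nat

text \<open>Lists rather than sets, so that the closure of an explicit set of variables evaluates
  by simplification.\<close>

definition nodes :: "nat \<Rightarrow> nat list" where
  "nodes n = [1..<Suc n]"

definition code_vars :: "nat \<Rightarrow> code_var list" where
  "code_vars n = map Stored (nodes n) @
     concat (map (\<lambda>i. map (Sent i) (filter (\<lambda>j. j \<noteq> i) (nodes n))) (nodes n))"

definition node :: "nat \<Rightarrow> nat \<Rightarrow> code_var set" where
  "node n j = set (Stored j # map (Sent j) (filter (\<lambda>i. i \<noteq> j) (nodes n)))"

definition derivable :: "nat \<Rightarrow> nat \<Rightarrow> nat \<Rightarrow> code_var set \<Rightarrow> code_var \<Rightarrow> bool" where
  "derivable n k d V x \<longleftrightarrow>
     k \<le> length (filter (\<lambda>j. Stored j \<in> V) (nodes n)) \<or>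
     (case x of
        Stored j \<Rightarrow> d \<le> length (filter (\<lambda>i. i \<noteq> j \<and> Sent i j \<in> V) (nodes n))
      | Sent i j \<Rightarrow> Stored i \<in> V)"

definition closure_step :: "nat \<Rightarrow> nat \<Rightarrow> nat \<Rightarrow> code_var set \<Rightarrow> code_var set" where
  "closure_step n k d V = V \<union> set (filter (derivable n k d V) (code_vars n))"

lemma set_nodes: "set (nodes n) = {1..n}"
  by (auto simp: nodes_def)

lemma length_filter_nodes: "length (filter P (nodes n)) = card {i \<in> {1..n}. P i}"
  by (metis distinct_card distinct_filter distinct_upt nodes_def set_filter set_nodes)

lemma mem_code_vars:
  "x \<in> set (code_vars n) \<longleftrightarrow>
     (case x of Stored j \<Rightarrow> j \<in> {1..n} | Sent i j \<Rightarrow> i \<in> {1..n} \<and> j \<in> {1..n} \<and> i \<noteq> j)"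
  by (cases x) (auto simp: code_vars_def set_nodes)

lemma closure_step_funpow_subset:
  "V \<subseteq> set (code_vars n) \<Longrightarrow> (closure_step n k d ^^ m) V \<subseteq> set (code_vars n)"
  by (induction m) (auto simp: closure_step_def)

locale regen_code_setting =
  fixes n k d :: nat and p :: "'o pmf" and M :: "'o \<Rightarrow> 'm" and W :: "nat \<Rightarrow> 'o \<Rightarrow> 'w"
    and S :: "nat \<Rightarrow> nat \<Rightarrow> 'o \<Rightarrow> 's" and B \<alpha> \<beta> :: real
  assumes regen_code: "regen_code n k d p M W S B \<alpha> \<beta>"
begin

lemma k_le_n: "k \<le> n"
  using regen_code unfolding regen_code_def by linarith

lemma ent_M: "ent p M = ennreal B"
  and nonneg: "0 \<le> B" "0 \<le> \<alpha>" "0 \<le> \<beta>"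
  using regen_code unfolding regen_code_def by blast+

lemma ent_W: "j \<in> {1..n} \<Longrightarrow> ent p (W j) = ennreal \<alpha>"
  and cond_ent_W_M: "j \<in> {1..n} \<Longrightarrow> cond_ent p (W j) M = 0"
  and ent_S: "i \<in> {1..n} \<Longrightarrow> j \<in> {1..n} \<Longrightarrow> i \<noteq> j \<Longrightarrow> ent p (S i j) = ennreal \<beta>"
  and cond_ent_S_W: "i \<in> {1..n} \<Longrightarrow> j \<in> {1..n} \<Longrightarrow> i \<noteq> j \<Longrightarrow> cond_ent p (S i j) (W i) = 0"
  and cond_ent_M_W: "J \<subseteq> {1..n} \<Longrightarrow> k \<le> card J \<Longrightarrow> cond_ent p M (tup J W) = 0"
  and cond_ent_W_S:
    "j \<in> {1..n} \<Longrightarrow> I \<subseteq> {1..n} - {j} \<Longrightarrow> d \<le> card I \<Longrightarrow> cond_ent p (W j) (tup I (\<lambda>i. S i j)) = 0"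
  using regen_code unfolding regen_code_def by blast+

definition val :: "code_var \<Rightarrow> 'o \<Rightarrow> 'w + 's" where
  "val x w = (case x of Stored j \<Rightarrow> Inl (W j w) | Sent i j \<Rightarrow> Inr (S i j w))"

definition joint :: "code_var set \<Rightarrow> 'o \<Rightarrow> code_var \<Rightarrow> 'w + 's" where
  "joint V w = (\<lambda>x. if x \<in> V then val x w else undefined)"

definition determines :: "code_var set \<Rightarrow> ('o \<Rightarrow> 'x) \<Rightarrow> bool" where
  "determines V X \<longleftrightarrow>
     (\<forall>w\<in>set_pmf p. \<forall>w'\<in>set_pmf p. (\<forall>y\<in>V. val y w = val y w') \<longrightarrow> X w = X w')"

lemma joint_eq_iff: "joint V w = joint V w' \<longleftrightarrow> (\<forall>x\<in>V. val x w = val x w')"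
  unfolding joint_def fun_eq_iff by metis

lemma determinesI:
  "(\<And>w w'. w \<in> set_pmf p \<Longrightarrow> w' \<in> set_pmf p \<Longrightarrow> \<forall>y\<in>V. val y w = val y w' \<Longrightarrow> X w = X w')
    \<Longrightarrow> determines V X"
  unfolding determines_def by blast

lemma determinesD:
  "determines V X \<Longrightarrow> w \<in> set_pmf p \<Longrightarrow> w' \<in> set_pmf p \<Longrightarrow> \<forall>y\<in>V. val y w = val y w' \<Longrightarrow> X w = X w'"
  unfolding determines_def by blast

lemma determines_val: "x \<in> V \<Longrightarrow> determines V (val x)"
  by (rule determinesI) blast

lemma determines_trans:
  "\<forall>u\<in>U. determines V (val u) \<Longrightarrow> determines U X \<Longrightarrow> determines V X"
  unfolding determines_def by blast

lemma determines_Sent: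
  assumes "i \<in> {1..n}" "j \<in> {1..n}" "i \<noteq> j" and "determines V (val (Stored i))"
  shows "determines V (val (Sent i j))"
proof (rule determinesI)
  fix w w' assume w: "w \<in> set_pmf p" "w' \<in> set_pmf p" and "\<forall>y\<in>V. val y w = val y w'"
  then have "val (Stored i) w = val (Stored i) w'"
    by (rule determinesD[OF assms(4)])
  then have "W i w = W i w'"
    by (simp add: val_def)
  then show "val (Sent i j) w = val (Sent i j) w'"
    using cond_ent_eq_0_imp_eq[OF cond_ent_S_W[OF assms(1-3)] w] by (simp add: val_def)
qed

lemma determines_Stored_repair:
  assumes "j \<in> {1..n}" "I \<subseteq> {1..n} - {j}" "d \<le> card I"
    and "\<forall>i\<in>I. determines V (val (Sent i j))"
  shows "determines V (val (Stored j))"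
proof (rule determinesI)
  fix w w' assume w: "w \<in> set_pmf p" "w' \<in> set_pmf p" and "\<forall>y\<in>V. val y w = val y w'"
  then have "\<forall>i\<in>I. val (Sent i j) w = val (Sent i j) w'"
    using assms(4) determinesD by blast
  then have "\<forall>i\<in>I. S i j w = S i j w'"
    by (simp add: val_def)
  then show "val (Stored j) w = val (Stored j) w'"
    using cond_ent_tup_eq_0_imp_eq[OF cond_ent_W_S[OF assms(1-3)] w] by (simp add: val_def)
qed

lemma determines_M_decode:
  assumes "J \<subseteq> {1..n}" "k \<le> card J" and "\<forall>j\<in>J. determines V (val (Stored j))"
  shows "determines V M"
proof (rule determinesI)
  fix w w' assume w: "w \<in> set_pmf p" "w' \<in> set_pmf p" and "\<forall>y\<in>V. val y w = val y w'"
  then have "\<forall>j\<in>J. val (Stored j) w = val (Stored j) w'"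
    using assms(3) determinesD by blast
  then have "\<forall>j\<in>J. W j w = W j w'"
    by (simp add: val_def)
  then show "M w = M w'"
    by (rule cond_ent_tup_eq_0_imp_eq[OF cond_ent_M_W[OF assms(1,2)] w])
qed

lemma val_eq_if_M_eq:
  assumes w: "w \<in> set_pmf p" "w' \<in> set_pmf p" and "M w = M w'" and x: "x \<in> set (code_vars n)"
  shows "val x w = val x w'"
proof -
  have W_eq: "W j w = W j w'" if "j \<in> {1..n}" for j
    using cond_ent_eq_0_imp_eq[OF cond_ent_W_M[OF that] w] \<open>M w = M w'\<close> .
  show ?thesis
  proof (cases x)
    case (Stored j)
    then show ?thesis using x W_eq by (simp add: val_def mem_code_vars)
  next
    case (Sent i j)
    then have "i \<in> {1..n}" "j \<in> {1..n}" "i \<noteq> j"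
      using x by (simp_all add: mem_code_vars)
    then show ?thesis
      using Sent W_eq cond_ent_eq_0_imp_eq[OF cond_ent_S_W w] by (simp add: val_def)
  qed
qed

lemma determines_code_var_of_M:
  assumes "determines V M" and "x \<in> set (code_vars n)"
  shows "determines V (val x)"
  using assms by (auto intro!: determinesI val_eq_if_M_eq dest: determinesD)

lemma determines_derivable:
  assumes "x \<in> set (code_vars n)" and "derivable n k d V x"
  shows "determines V (val x)"
proof (cases "k \<le> card {j \<in> {1..n}. Stored j \<in> V}")
  case True
  then have "determines V M"
    by (intro determines_M_decode[of "{j \<in> {1..n}. Stored j \<in> V}"]) (auto intro: determines_val)
  then show ?thesis
    using assms(1) by (rule determines_code_var_of_M)
next
  case False
  show ?thesis
  proof (cases x)
    case (Stored j)
    with assms False have "j \<in> {1..n}" "d \<le> card {i \<in> {1..n}. i \<noteq> j \<and> Sent i j \<in> V}"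
      by (simp_all add: derivable_def length_filter_nodes mem_code_vars)
    then show ?thesis
      unfolding Stored by (intro determines_Stored_repair[of _ "{i \<in> {1..n}. i \<noteq> j \<and> Sent i j \<in> V}"])
        (auto intro: determines_val)
  next
    case (Sent i j)
    with assms False have "i \<in> {1..n}" "j \<in> {1..n}" "i \<noteq> j" "Stored i \<in> V"
      by (simp_all add: derivable_def length_filter_nodes mem_code_vars)
    then show ?thesis
      unfolding Sent by (intro determines_Sent determines_val)
  qed
qed

lemma determines_closure:
  "x \<in> (closure_step n k d ^^ m) V \<Longrightarrow> determines V (val x)"
proof (induction m arbitrary: x)
  case 0
  then show ?case by (simp add: determines_val)
next
  case (Suc m)
  have "determines ((closure_step n k d ^^ m) V) (val x)"
    using Suc.prems determines_val determines_derivable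
    unfolding closure_step_def by auto
  then show ?case
    using Suc.IH determines_trans by blast
qed

definition ent_vars :: "code_var set \<Rightarrow> ennreal" where
  "ent_vars V = ent p (joint V)"

lemma ent_vars_le_if_determined:
  assumes "\<forall>x\<in>U. determines V (val x)"
  shows "ent_vars U \<le> ent_vars V"
  unfolding ent_vars_def
proof (intro ent_le_if_determined ballI impI)
  fix w w' assume "w \<in> set_pmf p" "w' \<in> set_pmf p" "joint V w = joint V w'"
  then show "joint U w = joint U w'"
    using assms determinesD unfolding joint_eq_iff by blast
qed

lemma ent_vars_mono: "U \<subseteq> V \<Longrightarrow> ent_vars U \<le> ent_vars V"
  by (auto intro: ent_vars_le_if_determined determines_val)

lemma ent_vars_submodular: "ent_vars (A \<union> C) + ent_vars (A \<inter> C) \<le> ent_vars A + ent_vars C"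
proof -
  have "ent p (\<lambda>w. (joint (A - C) w, joint (C - A) w, joint (A \<inter> C) w)) + ent p (joint (A \<inter> C))
      \<le> ent p (\<lambda>w. (joint (A - C) w, joint (A \<inter> C) w)) + ent p (\<lambda>w. (joint (C - A) w, joint (A \<inter> C) w))"
    by (rule ent_submodular)
  moreover have "ent p (\<lambda>w. (joint (A - C) w, joint (C - A) w, joint (A \<inter> C) w)) = ent_vars (A \<union> C)"
    and "ent p (\<lambda>w. (joint (A - C) w, joint (A \<inter> C) w)) = ent_vars A"
    and "ent p (\<lambda>w. (joint (C - A) w, joint (A \<inter> C) w)) = ent_vars C"
    unfolding ent_vars_def by (rule ent_cong_partition; simp only: prod.inject joint_eq_iff; blast)+
  ultimately show ?thesis
    unfolding ent_vars_def by simp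
qed

lemma ent_vars_singleton: "ent_vars {x} = ent p (val x)"
  unfolding ent_vars_def by (rule ent_cong_partition) (simp add: joint_eq_iff)

lemma ent_vars_code_vars: "ent_vars (set (code_vars n)) = ennreal B"
proof -
  have "determines (set (code_vars n)) M"
    using k_le_n by (intro determines_M_decode[of "{1..n}"]) (auto intro: determines_val simp: mem_code_vars)
  then have "ent_vars (set (code_vars n)) = ent p M"
    unfolding ent_vars_def
    by (intro ent_cong_partition) (auto simp: joint_eq_iff intro: val_eq_if_M_eq dest: determinesD)
  then show ?thesis
    by (simp add: ent_M)
qed

definition H :: "code_var set \<Rightarrow> real" where
  "H V = enn2real (ent_vars V)"

lemma H_nonneg: "0 \<le> H V"
  by (simp add: H_def)

lemma ent_vars_eq_H:
  assumes "V \<subseteq> set (code_vars n)"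
  shows "ent_vars V = ennreal (H V)"
proof -
  have "ent_vars V \<le> ennreal B"
    using ent_vars_mono[OF assms] ent_vars_code_vars by simp
  then have "ent_vars V < \<top>"
    using ennreal_less_top by (rule le_less_trans)
  then show ?thesis
    unfolding H_def by simp
qed

lemma H_Stored: "j \<in> {1..n} \<Longrightarrow> H {Stored j} = \<alpha>"
proof -
  have "ent p (val (Stored j)) = ent p (W j)"
    by (rule ent_cong_partition) (simp add: val_def)
  then show "j \<in> {1..n} \<Longrightarrow> H {Stored j} = \<alpha>"
    unfolding H_def ent_vars_singleton by (simp add: ent_W nonneg)
qed

lemma H_Sent: "i \<in> {1..n} \<Longrightarrow> j \<in> {1..n} \<Longrightarrow> i \<noteq> j \<Longrightarrow> H {Sent i j} = \<beta>"
proof -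
  have "ent p (val (Sent i j)) = ent p (S i j)"
    by (rule ent_cong_partition) (simp add: val_def)
  then show "i \<in> {1..n} \<Longrightarrow> j \<in> {1..n} \<Longrightarrow> i \<noteq> j \<Longrightarrow> H {Sent i j} = \<beta>"
    unfolding H_def ent_vars_singleton by (simp add: ent_S nonneg)
qed

lemma H_code_vars: "H (set (code_vars n)) = B"
  unfolding H_def by (simp add: ent_vars_code_vars nonneg)

lemma H_node: "j \<in> {1..n} \<Longrightarrow> H (node n j) = \<alpha>"
proof -
  assume j: "j \<in> {1..n}"
  have "ent_vars (node n j) \<le> ent_vars {Stored j}"
    using j by (intro ent_vars_le_if_determined)
      (auto simp: node_def set_nodes intro: determines_Sent determines_val)
  moreover have "ent_vars {Stored j} \<le> ent_vars (node n j)"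
    by (rule ent_vars_mono) (simp add: node_def)
  ultimately show ?thesis
    using H_Stored[OF j] unfolding H_def by simp
qed

lemma H_submodular_closure:
  assumes "X \<subseteq> A \<inter> C" and "U \<subseteq> (closure_step n k d ^^ m) (A \<union> C)"
    and "A \<subseteq> set (code_vars n)" and "C \<subseteq> set (code_vars n)"
  shows "H U + H X \<le> H A + H C"
proof -
  have code_vars: "U \<subseteq> set (code_vars n)" "X \<subseteq> set (code_vars n)" "A \<union> C \<subseteq> set (code_vars n)"
    using assms closure_step_funpow_subset[of "A \<union> C"] by blast+
  have "ent_vars U + ent_vars X \<le> ent_vars (A \<union> C) + ent_vars (A \<inter> C)"
    using assms(1,2) determines_closure
    by (intro add_mono ent_vars_mono ent_vars_le_if_determined) blast+
  also have "\<dots> \<le> ent_vars A + ent_vars C"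
    by (rule ent_vars_submodular)
  finally show ?thesis
    using assms(3,4) code_vars
    by (simp add: ent_vars_eq_H H_nonneg ennreal_plus[symmetric] del: ennreal_plus)
qed

lemma H_subadditive_closure:
  assumes "U \<subseteq> (closure_step n k d ^^ m) (A \<union> C)"
    and "A \<subseteq> set (code_vars n)" and "C \<subseteq> set (code_vars n)"
  shows "H U \<le> H A + H C"
  using H_submodular_closure[OF empty_subsetI assms] H_nonneg[of "{}"] by linarith

lemma H_mono_closure:
  assumes "U \<subseteq> (closure_step n k d ^^ m) A" and "A \<subseteq> set (code_vars n)"
  shows "H U \<le> H A"
  using H_submodular_closure[of "{}" A "{}" U m] assms H_nonneg[of "{}"] by simp

end


section \<open>The bound for \<open>(n, k, d) = (5, 4, 4)\<close>\<close>

locale regen_code_544 = regen_code_setting 5 4 4 p M W S B \<alpha> \<beta>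
  for p :: "'o pmf" and M :: "'o \<Rightarrow> 'm" and W :: "nat \<Rightarrow> 'o \<Rightarrow> 'w"
    and S :: "nat \<Rightarrow> nat \<Rightarrow> 'o \<Rightarrow> 's" and B \<alpha> \<beta> :: real
begin

abbreviation N :: "nat \<Rightarrow> code_var set" where
  "N \<equiv> node 5"

lemma nodes_5: "nodes 5 = [1, 2, 3, 4, 5]"
  by (simp add: nodes_def upt_rec)

lemmas closure_simps =
  closure_step_def derivable_def code_vars_def node_def nodes_5 numeral_2_eq_2

lemma five_B_le: "5 * B \<le> 7 * \<alpha> + 22 * \<beta>"
proof -
  have
    "H (N 1 \<union> {Sent 2 3}) \<le> H (N 1) + H {Sent 2 3}"
    "H (N 2 \<union> {Sent 1 4}) \<le> H {Sent 1 4} + H (N 2)"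
    "H (N 2 \<union> {Sent 3 4}) \<le> H {Sent 3 4} + H (N 2)"
    "H (N 3 \<union> {Sent 5 2}) \<le> H {Sent 5 2} + H (N 3)"
    "H (N 3 \<union> {Sent 5 4}) \<le> H (N 3) + H {Sent 5 4}"
    "H (N 4 \<union> {Sent 3 1}) \<le> H (N 4) + H {Sent 3 1}"
    "H (N 4 \<union> {Sent 5 3}) \<le> H {Sent 5 3} + H (N 4)"
    "H (N 5 \<union> {Sent 1 4}) \<le> H {Sent 1 4} + H (N 5)"
    "H (N 5 \<union> {Sent 3 4}) \<le> H {Sent 3 4} + H (N 5)"
    "H {Sent 3 1, Sent 3 2} \<le> H {Sent 3 1} + H {Sent 3 2}"
    "H {Sent 2 5, Sent 5 3} \<le> H {Sent 5 3} + H {Sent 2 5}"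
    "H {Sent 1 4, Sent 5 4} \<le> H {Sent 1 4} + H {Sent 5 4}"
    "H {Sent 2 1, Sent 5 1} \<le> H {Sent 5 1} + H {Sent 2 1}"
    "H {Sent 2 3, Sent 5 3} \<le> H {Sent 2 3} + H {Sent 5 3}"
    "H {Sent 2 4, Sent 3 4} \<le> H {Sent 3 4} + H {Sent 2 4}"
    "H {Sent 2 4, Sent 5 4} \<le> H {Sent 5 4} + H {Sent 2 4}"
    "H {Sent 3 1, Sent 5 1} \<le> H {Sent 5 1} + H {Sent 3 1}"
    by (rule H_subadditive_closure[where m = 2]; simp add: closure_simps)+
  moreover have
    "H (N 1 \<union> N 4 \<union> {Sent 2 3}) + H (N 1) \<le> H (N 1 \<union> {Sent 2 3}) + H (N 1 \<union> N 4)"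
    "H (N 3 \<union> N 4 \<union> {Sent 5 2}) + H (N 3) \<le> H (N 3 \<union> {Sent 5 2}) + H (N 3 \<union> N 4)"
    "H (N 2 \<union> N 4 \<union> {Sent 5 3}) + H (N 4) \<le> H (N 2 \<union> N 4) + H (N 4 \<union> {Sent 5 3})"
    "H (N 2 \<union> {Sent 1 4, Sent 3 4}) + H (N 2) \<le> H (N 2 \<union> {Sent 3 4}) + H (N 2 \<union> {Sent 1 4})"
    "H (N 5 \<union> {Sent 1 4, Sent 2 4}) + H (N 5) \<le> H (N 5 \<union> {Sent 2 4}) + H (N 5 \<union> {Sent 1 4})"
    "H (N 3 \<union> N 4 \<union> {Sent 5 1, Sent 5 2}) + H (N 3 \<union> N 4) \<le> H (N 3 \<union> N 4 \<union> {Sent 5 2}) + H (N 3 \<union> N 4 \<union> {Sent 5 1})"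
    "H (N 2 \<union> N 4 \<union> {Sent 3 1, Sent 5 3}) + H (N 2 \<union> N 4) \<le> H (N 2 \<union> N 4 \<union> {Sent 5 3}) + H (N 2 \<union> N 4 \<union> {Sent 3 1})"
    "H (N 1 \<union> N 4) + H {Sent 1 4} \<le> H (N 1) + H (N 4 \<union> {Sent 1 4})"
    "H (N 1 \<union> {Sent 2 3, Sent 5 3}) + H {Sent 2 3} \<le> H (N 1 \<union> {Sent 2 3}) + H {Sent 2 3, Sent 5 3}"
    "H (N 4 \<union> {Sent 3 1, Sent 5 1}) + H {Sent 3 1} \<le> H {Sent 3 1, Sent 5 1} + H (N 4 \<union> {Sent 3 1})"
    "H (N 5 \<union> {Sent 2 4, Sent 3 4}) + H {Sent 3 4} \<le> H {Sent 2 4, Sent 3 4} + H (N 5 \<union> {Sent 3 4})"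
    "H (N 3 \<union> {Sent 1 4, Sent 5 4}) + H {Sent 5 4} \<le> H (N 3 \<union> {Sent 5 4}) + H {Sent 1 4, Sent 5 4}"
    "H {Sent 2 1, Sent 3 1, Sent 3 2} + H {Sent 3 1} \<le> H {Sent 2 1, Sent 3 1} + H {Sent 3 1, Sent 3 2}"
    "H {Sent 2 3, Sent 2 5, Sent 5 3} + H {Sent 5 3} \<le> H {Sent 2 3, Sent 5 3} + H {Sent 2 5, Sent 5 3}"
    "H {Sent 1 4, Sent 3 4, Sent 5 4} + H {Sent 1 4} \<le> H {Sent 1 4, Sent 3 4} + H {Sent 1 4, Sent 5 4}"
    "H {Sent 2 1, Sent 3 1, Sent 5 1} + H {Sent 5 1} \<le> H {Sent 3 1, Sent 5 1} + H {Sent 2 1, Sent 5 1}"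
    "H {Sent 1 4, Sent 2 4, Sent 5 4} + H {Sent 5 4} \<le> H {Sent 1 4, Sent 5 4} + H {Sent 2 4, Sent 5 4}"
    "H (N 2 \<union> N 4 \<union> {Sent 1 4, Sent 3 1}) + H (N 4 \<union> {Sent 1 4}) \<le> H (N 2 \<union> N 4 \<union> {Sent 1 4}) + H (N 4 \<union> {Sent 1 4, Sent 3 1})"
    "H (N 3 \<union> N 4 \<union> {Sent 1 4, Sent 5 1}) + H (N 4 \<union> {Sent 1 4}) \<le> H (N 3 \<union> N 4 \<union> {Sent 1 4}) + H (N 4 \<union> {Sent 1 4, Sent 5 1})"
    "H (N 1 \<union> N 3 \<union> N 4 \<union> {Sent 2 3, Sent 5 3}) + H (N 1 \<union> {Sent 2 3}) \<le> H (N 1 \<union> {Sent 2 3, Sent 5 3}) + H (N 1 \<union> N 4 \<union> {Sent 2 3})"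
    "H (N 4 \<union> N 5 \<union> {Sent 1 4, Sent 2 4, Sent 3 4}) + H (N 5 \<union> {Sent 2 4}) \<le> H (N 5 \<union> {Sent 2 4, Sent 3 4}) + H (N 5 \<union> {Sent 1 4, Sent 2 4})"
    "H (N 1 \<union> N 3 \<union> N 4 \<union> {Sent 2 1, Sent 5 1}) + H (N 4 \<union> {Sent 1 4, Sent 3 1, Sent 5 1}) \<le> H (N 3 \<union> N 4 \<union> {Sent 1 4, Sent 5 1}) + H (N 1 \<union> N 4 \<union> {Sent 2 1, Sent 3 1, Sent 5 1})"
    "H (N 1 \<union> N 4 \<union> N 5 \<union> {Sent 2 1, Sent 3 1}) + H (N 4 \<union> {Sent 1 4, Sent 3 1, Sent 5 1}) \<le> H (N 1 \<union> N 4 \<union> {Sent 2 1, Sent 3 1, Sent 5 1}) + H (N 4 \<union> N 5 \<union> {Sent 1 4, Sent 3 1})"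
    "H (set (code_vars 5)) + H (N 3 \<union> N 4 \<union> {Sent 5 1}) \<le> H (N 3 \<union> N 4 \<union> {Sent 5 1, Sent 5 2}) + H (N 1 \<union> N 3 \<union> N 4 \<union> {Sent 2 1, Sent 5 1})"
    "H (set (code_vars 5)) + H (N 2 \<union> N 4 \<union> {Sent 3 1}) \<le> H (N 1 \<union> N 2 \<union> N 4 \<union> {Sent 3 1, Sent 5 1}) + H (N 2 \<union> N 4 \<union> {Sent 3 1, Sent 5 3})"
    "H (N 4 \<union> N 5 \<union> {Sent 1 4, Sent 3 1}) + H (N 4 \<union> {Sent 1 4, Sent 5 1}) \<le> H (N 4 \<union> N 5 \<union> {Sent 1 4}) + H (N 4 \<union> {Sent 1 4, Sent 3 1, Sent 5 1})"
    "H (N 1 \<union> N 2 \<union> N 4 \<union> {Sent 3 1, Sent 5 1}) + H (N 4 \<union> {Sent 1 4, Sent 3 1}) \<le> H (N 2 \<union> N 4 \<union> {Sent 1 4, Sent 3 1}) + H (N 4 \<union> {Sent 1 4, Sent 3 1, Sent 5 1})"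
    "H (set (code_vars 5)) + H (N 4 \<union> {Sent 2 3, Sent 5 3}) \<le> H (N 4 \<union> {Sent 2 3, Sent 2 5, Sent 5 3}) + H (N 1 \<union> N 3 \<union> N 4 \<union> {Sent 2 3, Sent 5 3})"
    "H (set (code_vars 5)) + H (N 4 \<union> {Sent 2 1, Sent 3 1}) \<le> H (N 1 \<union> N 4 \<union> N 5 \<union> {Sent 2 1, Sent 3 1}) + H (N 4 \<union> {Sent 2 1, Sent 3 1, Sent 3 2})"
    "H (N 4 \<union> {Sent 2 3, Sent 2 5, Sent 5 3}) + H {Sent 2 3, Sent 5 3} \<le> H {Sent 2 3, Sent 2 5, Sent 5 3} + H (N 4 \<union> {Sent 2 3, Sent 5 3})"
    "H (N 4 \<union> {Sent 2 1, Sent 3 1, Sent 3 2}) + H {Sent 2 1, Sent 3 1} \<le> H {Sent 2 1, Sent 3 1, Sent 3 2} + H (N 4 \<union> {Sent 2 1, Sent 3 1})"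
    "H (N 2 \<union> N 4 \<union> {Sent 1 4, Sent 3 4, Sent 5 4}) + H {Sent 1 4, Sent 3 4} \<le> H {Sent 1 4, Sent 3 4, Sent 5 4} + H (N 2 \<union> {Sent 1 4, Sent 3 4})"
    "H (N 3 \<union> N 4 \<union> {Sent 1 4, Sent 2 4, Sent 5 4}) + H {Sent 1 4, Sent 5 4} \<le> H (N 3 \<union> {Sent 1 4, Sent 5 4}) + H {Sent 1 4, Sent 2 4, Sent 5 4}"
    "H (N 1 \<union> N 4 \<union> {Sent 2 1, Sent 3 1, Sent 5 1}) + H {Sent 3 1, Sent 5 1} \<le> H (N 4 \<union> {Sent 3 1, Sent 5 1}) + H {Sent 2 1, Sent 3 1, Sent 5 1}"
    by (rule H_submodular_closure[where m = 2]; simp add: closure_simps)+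
  moreover have
    "H (N 2 \<union> N 4 \<union> {Sent 1 4}) \<le> H (N 2 \<union> N 4 \<union> {Sent 1 4, Sent 3 4})"
    "H (N 3 \<union> N 4 \<union> {Sent 1 4}) \<le> H (N 3 \<union> N 4 \<union> {Sent 1 4, Sent 2 4})"
    "H (N 4 \<union> N 5 \<union> {Sent 1 4}) \<le> H (N 4 \<union> N 5 \<union> {Sent 1 4, Sent 2 4})"
    "H (N 2 \<union> N 4 \<union> {Sent 1 4, Sent 3 4}) \<le> H (N 2 \<union> N 4 \<union> {Sent 1 4, Sent 3 4, Sent 5 4})"
    "H (N 3 \<union> N 4 \<union> {Sent 1 4, Sent 2 4}) \<le> H (N 3 \<union> N 4 \<union> {Sent 1 4, Sent 2 4, Sent 5 4})"
    "H (N 4 \<union> N 5 \<union> {Sent 1 4, Sent 2 4}) \<le> H (N 4 \<union> N 5 \<union> {Sent 1 4, Sent 2 4, Sent 3 4})"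
    by (rule H_mono_closure[where m = 2]; simp add: closure_simps)+
  moreover have "H (N 1) = \<alpha>" "H (N 2) = \<alpha>" "H (N 3) = \<alpha>" "H (N 4) = \<alpha>" "H (N 5) = \<alpha>"
    by (simp_all add: H_node)
  moreover have "H {Sent 1 4} = \<beta>" "H {Sent 2 1} = \<beta>" "H {Sent 2 3} = \<beta>"
    "H {Sent 2 4} = \<beta>" "H {Sent 2 5} = \<beta>" "H {Sent 3 1} = \<beta>"
    "H {Sent 3 2} = \<beta>" "H {Sent 3 4} = \<beta>" "H {Sent 5 1} = \<beta>"
    "H {Sent 5 2} = \<beta>" "H {Sent 5 3} = \<beta>" "H {Sent 5 4} = \<beta>"
    by (simp_all add: H_Sent)
  ultimately show ?thesis
    using H_code_vars by linarith
qed

end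

theorem mainTheorem11:
  fixes p :: "'o pmf" and M :: "'o \<Rightarrow> 'm" and W :: "nat \<Rightarrow> 'o \<Rightarrow> 'w"
    and S :: "nat \<Rightarrow> nat \<Rightarrow> 'o \<Rightarrow> 's" and B \<alpha> \<beta> :: real
  assumes "regen_code 5 4 4 p M W S B \<alpha> \<beta>"
  shows "5 * B \<le> 7 * \<alpha> + 22 * \<beta>"
proof -
  interpret regen_code_544 p M W S B \<alpha> \<beta>
    by unfold_locales (fact assms)
  show ?thesis
    by (fact five_B_le)
qed

end
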